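(* Let $V\subset\mathbb{R}^d$ be a finite non-degenerate antichain and let $p\in S_V$ be a generated point. Then $p$ is a characteristic point if and only if there are no minima $u,v\in D_p$ with $T_p(u)\subsetneq T_p(v)$.
   Context: For $x,y\in\mathbb{R}^d$, $x\le y$ (dominance order) means $x_i\le y_i$ for all $i$; $y\rhd x$ means $y_i>x_i$ for all $i$; $y\rhd_i x$ means $y_i=x_i$ and $y_j>x_j$ for all $j\neq i$. The join is the componentwise maximum. $V\subset\mathbb{R}^d$ is a finite antichain in the dominance order (elements are called minima). The orthogonal surface $S_V$ is the topological boundary of $\langle V\rangle=\{x: x\ge v\text{ for some }v\in V\}$; equivalently $p\in S_V$ iff there is $v\in V$ with $v\le p$ and no $w\in V$ with $p\rhd w$. For $p\in S_V$, $D_p=\{v\in V:v\le p\}$ and for $v\in D_p$, $T_p(v)=\{i: p_i=v_i\}$. A generated point is a point $p\in S_V$ equal to $\bigvee G$ for some nonempty $G\subseteq V$. Flats: $U_i(v)=\{p\in S_V: p\rhd_i v\}$; for $v,w\in V$ put $v\sim_i w$ iff $U_i(v)\cap U_i(w)\neq\emptyset$, and let $\sim_i^c$ be the reflexive–transitive closure; the $i$-flat of $v$ is $F_i(v)=\overline{\bigcup_{w\sim_i^c v}U_i(w)}$ (topological closure), and an $i$-flat is any set of this form. A characteristic point is a point of $S_V$ that lies in some $i$-flat for every $i\in\{1,\dots,d\}$. $V$ (and $S_V$) is degenerate if there exist a characteristic point $p$, minima $x,u,v\in D_p$ and coordinates $i\neq j$ with $u_i<v_i=x_i=p_i$ and $v_j<u_j=x_j=p_j$;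 otherwise $V$ is non-degenerate. *)

theory Defs
  imports "HOL-Analysis.Analysis"
begin

text \<open>Points of R^d are modelled as vectors of type real ^ 'd, coordinates indexed
by the finite type 'd (so d = CARD('d)).\<close>

definition dom_le :: "real ^ 'd \<Rightarrow> real ^ 'd \<Rightarrow> bool" where
  "dom_le x y \<longleftrightarrow> (\<forall>i. x $ i \<le> y $ i)"

definition dom_gt :: "real ^ 'd \<Rightarrow> real ^ 'd \<Rightarrow> bool" where
  "dom_gt y x \<longleftrightarrow> (\<forall>i. y $ i > x $ i)"

definition dom_gt_i :: "'d \<Rightarrow> real ^ 'd \<Rightarrow> real ^ 'd \<Rightarrow> bool" where
  "dom_gt_i i y x \<longleftrightarrow> y $ i = x $ i \<and> (\<forall>j. j \<noteq> i \<longrightarrow> y $ j > x $ j)"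

definition join :: "(real ^ 'd) set \<Rightarrow> real ^ 'd" where
  "join G = (\<chi> i. Max ((\<lambda>v. v $ i) ` G))"

definition antichain :: "(real ^ 'd) set \<Rightarrow> bool" where
  "antichain V \<longleftrightarrow> (\<forall>v\<in>V. \<forall>w\<in>V. dom_le v w \<longrightarrow> v = w)"

definition surface :: "(real ^ 'd) set \<Rightarrow> (real ^ 'd) set" where
  "surface V = {p. (\<exists>v\<in>V. dom_le v p) \<and> \<not> (\<exists>w\<in>V. dom_gt p w)}"

definition Dp :: "(real ^ 'd) set \<Rightarrow> real ^ 'd \<Rightarrow> (real ^ 'd) set" where
  "Dp V p = {v\<in>V. dom_le v p}"

definition Tp :: "real ^ 'd \<Rightarrow> real ^ 'd \<Rightarrow> 'd set" where
  "Tp p v = {i. p $ i = v $ i}"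

definition generated :: "(real ^ 'd) set \<Rightarrow> real ^ 'd \<Rightarrow> bool" where
  "generated V p \<longleftrightarrow> p \<in> surface V \<and> (\<exists>G. G \<noteq> {} \<and> G \<subseteq> V \<and> p = join G)"

definition Uflat :: "(real ^ 'd) set \<Rightarrow> 'd \<Rightarrow> real ^ 'd \<Rightarrow> (real ^ 'd) set" where
  "Uflat V i v = {p \<in> surface V. dom_gt_i i p v}"

definition sim_rel :: "(real ^ 'd) set \<Rightarrow> 'd \<Rightarrow> ((real ^ 'd) \<times> (real ^ 'd)) set" where
  "sim_rel V i = {(v, w). v \<in> V \<and> w \<in> V \<and> Uflat V i v \<inter> Uflat V i w \<noteq> {}}"

definition simc :: "(real ^ 'd) set \<Rightarrow> 'd \<Rightarrow> ((real ^ 'd) \<times> (real ^ 'd)) set" where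
  "simc V i = (sim_rel V i)\<^sup>*"

definition flat :: "(real ^ 'd) set \<Rightarrow> 'd \<Rightarrow> real ^ 'd \<Rightarrow> (real ^ 'd) set" where
  "flat V i v = closure (\<Union> {Uflat V i w | w. w \<in> V \<and> (v, w) \<in> simc V i})"

definition is_flat :: "(real ^ 'd) set \<Rightarrow> 'd \<Rightarrow> (real ^ 'd) set \<Rightarrow> bool" where
  "is_flat V i F \<longleftrightarrow> (\<exists>v\<in>V. F = flat V i v)"

definition characteristic :: "(real ^ 'd) set \<Rightarrow> real ^ 'd \<Rightarrow> bool" where
  "characteristic V p \<longleftrightarrow> p \<in> surface V \<and> (\<forall>i. \<exists>F. is_flat V i F \<and> p \<in> F)"

definition degenerate :: "(real ^ 'd) set \<Rightarrow> bool" where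
  "degenerate V \<longleftrightarrow> (\<exists>p x u v i j. characteristic V p \<and> x \<in> Dp V p \<and> u \<in> Dp V p \<and> v \<in> Dp V p
      \<and> i \<noteq> j \<and> u $ i < v $ i \<and> v $ i = x $ i \<and> x $ i = p $ i
      \<and> v $ j < u $ j \<and> u $ j = x $ j \<and> x $ j = p $ j)"

end

theory Submission
  imports Defs
begin

text \<open>Since there are only finitely many minima, an \<open>i\<close>-flat is a finite union of closures
of sets \<open>U\<^sub>i(w)\<close>, so \<open>p\<close> is characteristic iff for every \<open>i\<close> it lies in the closure of
some \<open>U\<^sub>i(w)\<close>; such a \<open>w\<close> lies in \<open>D\<^sub>p\<close> with \<open>w\<^sub>i = p\<^sub>i\<close>.

If \<open>T\<^sub>p(u) \<subset> T\<^sub>p(v)\<close>, take \<open>i \<in> T\<^sub>p(v) - T\<^sub>p(u)\<close> and such a \<open>w\<close>. Points \<open>q \<in> U\<^sub>i(w)\<close> close to \<open>p\<close>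
exceed \<open>u\<close> outside \<open>T\<^sub>p(u)\<close>, yet do not strictly dominate \<open>u\<close>; so some \<open>j \<in> T\<^sub>p(u)\<close>, \<open>j \<noteq> i\<close>,
has \<open>w\<^sub>j < q\<^sub>j \<le> u\<^sub>j = p\<^sub>j\<close>, and \<open>v, u, w, i, j\<close> witness degeneracy.

Conversely, a generating minimum \<open>v\<close> with \<open>v\<^sub>i = p\<^sub>i\<close> lies in \<open>D\<^sub>p\<close>. Raising \<open>p\<close> by a small
\<open>t > 0\<close> on the coordinates \<open>T\<^sub>p(v) - {i}\<close> gives a point of \<open>U\<^sub>i(v)\<close>: a minimum strictly below
it would lie in \<open>D\<^sub>p\<close> with \<open>T\<^sub>p\<close> strictly inside \<open>T\<^sub>p(v)\<close>. Letting \<open>t \<rightarrow> 0\<close> puts \<open>p\<close> in the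
closure of \<open>U\<^sub>i(v)\<close>.\<close>

lemma closure_Uflat_subset:
  "closure (Uflat V i w) \<subseteq> {x. dom_le w x \<and> x $ i = w $ i}"
proof (rule closure_minimal)
  show "Uflat V i w \<subseteq> {x. dom_le w x \<and> x $ i = w $ i}"
    unfolding Uflat_def dom_gt_i_def dom_le_def by (auto intro: less_imp_le) (metis order_refl less_imp_le)
  show "closed {x. dom_le w x \<and> x $ i = w $ i}"
    unfolding dom_le_def
    by (intro closed_Collect_conj closed_Collect_all closed_Collect_eq closed_Collect_le continuous_intros)
qed

lemma closure_Uflat_subset_flat:
  assumes "w \<in> V"
  shows "closure (Uflat V i w) \<subseteq> flat V i w"
  unfolding flat_def simc_def using assms by (intro closure_mono) blast

lemma flat_subset_closure_Uflat:
  assumes "finite V"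
  shows "flat V i v \<subseteq> (\<Union>w\<in>V. closure (Uflat V i w))"
  unfolding flat_def
proof (rule closure_minimal)
  show "\<Union> {Uflat V i w | w. w \<in> V \<and> (v, w) \<in> simc V i} \<subseteq> (\<Union>w\<in>V. closure (Uflat V i w))"
    using closure_subset by blast
  show "closed (\<Union>w\<in>V. closure (Uflat V i w))"
    using assms by (intro closed_UN) auto
qed

lemma characteristic_iff_closure_Uflat:
  assumes "finite V"
  shows "characteristic V p \<longleftrightarrow> p \<in> surface V \<and> (\<forall>i. \<exists>w\<in>V. p \<in> closure (Uflat V i w))"
  unfolding characteristic_def is_flat_def
  using flat_subset_closure_Uflat[OF assms] closure_Uflat_subset_flat by blast

lemma closure_Uflat_ex_Tp_below:
  assumes "p \<in> closure (Uflat V i w)" "u \<in> Dp V p" "i \<notin> Tp p u"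
  shows "\<exists>j\<in>Tp p u. j \<noteq> i \<and> w $ j < u $ j"
proof -
  define above where "above = {x. \<forall>k\<in>-Tp p u. u $ k < x $ k}"
  have "open above"
  proof -
    have "above = (\<Inter>k\<in>-Tp p u. {x. u $ k < x $ k})"
      unfolding above_def by auto
    then show ?thesis
      by (simp add: open_INT open_Collect_less continuous_on_component)
  qed
  moreover have "p \<in> above"
    using \<open>u \<in> Dp V p\<close> unfolding above_def Dp_def dom_le_def Tp_def by (auto simp: order.order_iff_strict)
  ultimately obtain q where "q \<in> above" "q \<in> Uflat V i w"
    using assms(1) open_Int_closure_eq_empty by blast
  then have "\<not> dom_gt q u"
    using \<open>u \<in> Dp V p\<close> unfolding Uflat_def surface_def Dp_def by auto
  then obtain j where "q $ j \<le> u $ j"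
    unfolding dom_gt_def by (auto simp: not_less)
  with \<open>q \<in> above\<close> have "j \<in> Tp p u"
    unfolding above_def by force
  moreover have "w $ j < q $ j" if "j \<noteq> i"
    using \<open>q \<in> Uflat V i w\<close> that unfolding Uflat_def dom_gt_i_def by auto
  ultimately show ?thesis
    using \<open>q $ j \<le> u $ j\<close> assms(3) by force
qed

lemma characteristic_imp_Tp_not_psubset:
  assumes "finite V" "\<not> degenerate V" "characteristic V p" "u \<in> Dp V p" "v \<in> Dp V p"
  shows "\<not> Tp p u \<subset> Tp p v"
proof
  assume "Tp p u \<subset> Tp p v"
  then obtain i where "i \<in> Tp p v" "i \<notin> Tp p u"
    by blast
  obtain w where "w \<in> V" and p_w: "p \<in> closure (Uflat V i w)"
    using assms(1,3) characteristic_iff_closure_Uflat by blast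
  then have "w \<in> Dp V p" "w $ i = p $ i"
    using closure_Uflat_subset unfolding Dp_def by fastforce+
  obtain j where "j \<in> Tp p u" "j \<noteq> i" "w $ j < u $ j"
    using closure_Uflat_ex_Tp_below[OF p_w \<open>u \<in> Dp V p\<close> \<open>i \<notin> Tp p u\<close>] by blast
  have "u $ i < p $ i"
    using \<open>u \<in> Dp V p\<close> \<open>i \<notin> Tp p u\<close> unfolding Dp_def dom_le_def Tp_def
    by (auto simp: order.order_iff_strict)
  then have "degenerate V"
    unfolding degenerate_def
    using assms(3-5) \<open>w \<in> Dp V p\<close> \<open>w $ i = p $ i\<close> \<open>i \<in> Tp p v\<close> \<open>j \<in> Tp p u\<close> \<open>j \<noteq> i\<close>
      \<open>Tp p u \<subset> Tp p v\<close> \<open>w $ j < u $ j\<close>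
    unfolding Tp_def by (intro exI[of _ p] exI[of _ v] exI[of _ u] exI[of _ w] exI[of _ i] exI[of _ j]) auto
  with assms(2) show False
    by blast
qed

lemma raised_point_in_Uflat:
  assumes "v \<in> Dp V p" "i \<in> Tp p v" "0 < t"
    and minimal: "\<And>w. w \<in> Dp V p \<Longrightarrow> \<not> Tp p w \<subset> Tp p v"
    and small: "\<And>w k. w \<in> V \<Longrightarrow> p $ k < w $ k \<Longrightarrow> p $ k + t < w $ k"
  shows "(\<chi> k. if k \<in> Tp p v - {i} then p $ k + t else p $ k) \<in> Uflat V i v"
    (is "?x \<in> _")
proof -
  have v_le: "v $ k \<le> p $ k" for k
    using \<open>v \<in> Dp V p\<close> unfolding Dp_def dom_le_def by blast
  have "v $ k < ?x $ k" if "k \<noteq> i" for k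
  proof (cases "k \<in> Tp p v")
    case True
    with that \<open>0 < t\<close> show ?thesis
      unfolding Tp_def by simp
  next
    case False
    with v_le[of k] show ?thesis
      unfolding Tp_def by simp
  qed
  moreover have "?x $ i = v $ i"
    using \<open>i \<in> Tp p v\<close> unfolding Tp_def by simp
  ultimately have "dom_gt_i i ?x v"
    unfolding dom_gt_i_def by blast
  then have "dom_le v ?x"
    unfolding dom_gt_i_def dom_le_def by (metis order_refl less_imp_le)
  moreover have "\<not> dom_gt ?x w" if "w \<in> V" for w
  proof
    assume gt: "dom_gt ?x w"
    have "w $ k \<le> p $ k" for k
    proof (rule ccontr)
      assume "\<not> w $ k \<le> p $ k"
      then have "p $ k + t < w $ k"
        using small[OF \<open>w \<in> V\<close>] by simp
      moreover have "w $ k < ?x $ k"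
        using gt unfolding dom_gt_def by blast
      ultimately show False
        using \<open>0 < t\<close> by (simp split: if_splits)
    qed
    with \<open>w \<in> V\<close> have "w \<in> Dp V p"
      unfolding Dp_def dom_le_def by blast
    moreover have "Tp p w \<subseteq> Tp p v - {i}"
    proof
      fix k
      assume "k \<in> Tp p w"
      moreover have "w $ k < ?x $ k"
        using gt unfolding dom_gt_def by blast
      ultimately show "k \<in> Tp p v - {i}"
        unfolding Tp_def by (simp split: if_splits)
    qed
    ultimately show False
      using minimal \<open>i \<in> Tp p v\<close> by blast
  qed
  ultimately show ?thesis
    using \<open>dom_gt_i i ?x v\<close> \<open>v \<in> Dp V p\<close> unfolding Uflat_def surface_def Dp_def by blast
qed

lemma closure_Uflat_if_Tp_minimal:
  assumes "finite V" "v \<in> Dp V p" "i \<in> Tp p v"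
    and minimal: "\<And>w. w \<in> Dp V p \<Longrightarrow> \<not> Tp p w \<subset> Tp p v"
  shows "p \<in> closure (Uflat V i v)"
proof -
  define x where "x t = (\<chi> k. if k \<in> Tp p v - {i} then p $ k + t else p $ k)" for t :: real
  have lim: "(x \<longlongrightarrow> p) (at_right 0)"
  proof (rule vec_tendstoI)
    fix k
    have "((\<lambda>t. p $ k + t) \<longlongrightarrow> p $ k) (at_right 0)"
      by (auto intro!: tendsto_eq_intros)
    then show "((\<lambda>t. x t $ k) \<longlongrightarrow> p $ k) (at_right 0)"
      unfolding x_def by (cases "k \<in> Tp p v - {i}") auto
  qed
  have "eventually (\<lambda>t. \<forall>w\<in>V. \<forall>k. p $ k < w $ k \<longrightarrow> p $ k + t < w $ k) (at_right 0)"
  proof (intro eventually_ball_finite[OF assms(1)] ballI eventually_all_finite)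
    fix w k
    have "((\<lambda>t. p $ k + t) \<longlongrightarrow> p $ k + 0) (at_right 0)"
      by (intro tendsto_intros)
    then show "eventually (\<lambda>t. p $ k < w $ k \<longrightarrow> p $ k + t < w $ k) (at_right 0)"
      by (cases "p $ k < w $ k") (auto dest: order_tendstoD(2))
  qed
  then have "eventually (\<lambda>t. x t \<in> Uflat V i v) (at_right 0)"
    using eventually_at_right_less[of 0] unfolding x_def
  proof eventually_elim
    case (elim t)
    then show ?case
      using raised_point_in_Uflat[OF assms(2,3) _ minimal] by blast
  qed
  then have "eventually (\<lambda>t. x t \<in> closure (Uflat V i v)) (at_right 0)"
    by (rule eventually_mono) (use closure_subset in blast)
  then show ?thesis
    using Lim_in_closed_set[OF closed_closure _ trivial_limit_at_right_real lim] by blast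
qed

lemma generated_imp_coordinate_attained:
  assumes "finite V" "generated V p"
  shows "\<exists>v\<in>Dp V p. i \<in> Tp p v"
proof -
  obtain G where "G \<noteq> {}" "G \<subseteq> V" "p = join G"
    using assms(2) unfolding generated_def by blast
  then have "finite G"
    using assms(1) finite_subset by blast
  have "Max ((\<lambda>v. v $ i) ` G) \<in> (\<lambda>v. v $ i) ` G"
    using \<open>finite G\<close> \<open>G \<noteq> {}\<close> by (intro Max_in) auto
  then obtain v where "v \<in> G" "v $ i = p $ i"
    using \<open>p = join G\<close> unfolding join_def by auto
  moreover have "dom_le v p"
    using \<open>finite G\<close> \<open>v \<in> G\<close> \<open>p = join G\<close> unfolding dom_le_def join_def by (auto intro: Max_ge)
  ultimately show ?thesis
    using \<open>G \<subseteq> V\<close> unfolding Dp_def Tp_def by auto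
qed

theorem proposition4p2:
  fixes V :: "(real ^ 'd) set" and p :: "real ^ 'd"
  assumes "finite V" and "antichain V" and "\<not> degenerate V"
    and "generated V p"
  shows "characteristic V p \<longleftrightarrow> \<not> (\<exists>u\<in>Dp V p. \<exists>v\<in>Dp V p. Tp p u \<subset> Tp p v)"
proof
  assume "characteristic V p"
  then show "\<not> (\<exists>u\<in>Dp V p. \<exists>v\<in>Dp V p. Tp p u \<subset> Tp p v)"
    using characteristic_imp_Tp_not_psubset[OF assms(1,3)] by blast
next
  assume incomparable: "\<not> (\<exists>u\<in>Dp V p. \<exists>v\<in>Dp V p. Tp p u \<subset> Tp p v)"
  show "characteristic V p"
    unfolding characteristic_iff_closure_Uflat[OF assms(1)]
  proof (intro conjI allI)
    show "p \<in> surface V"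
      using assms(4) unfolding generated_def by blast
    fix i
    obtain v where "v \<in> Dp V p" "i \<in> Tp p v"
      using generated_imp_coordinate_attained[OF assms(1,4)] by blast
    then have "p \<in> closure (Uflat V i v)"
      using closure_Uflat_if_Tp_minimal[OF assms(1)] incomparable by blast
    moreover have "v \<in> V"
      using \<open>v \<in> Dp V p\<close> unfolding Dp_def by blast
    ultimately show "\<exists>w\<in>V. p \<in> closure (Uflat V i w)"
      by blast
  qed
qed

end
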